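(* Let $\mu$ and $\lambda$ be constants, and let $r_\mu:=1/\sqrt{-\mu}$ if $\mu<0$ and $r_\mu:=+\infty$ if $\mu\ge 0$. Then the Randers metric $$F(x,y)=\frac{\sqrt[4]{1+(\mu+\lambda^2)|x|^2}\,\sqrt{(1+\mu|x|^2)|y|^2-\mu\langle x,y\rangle^2}}{1+\mu|x|^2}+\frac{\lambda\langle x,y\rangle}{(1+\mu|x|^2)\sqrt[4]{1+(\mu+\lambda^2)|x|^2}}$$ is dually flat on the ball $\mathbb{B}^n(r_\mu)=\{x\in\mathbb{R}^n:|x|<r_\mu\}$.
   Context: $|\cdot|$ and $\langle\cdot,\cdot\rangle$ are the Euclidean norm and inner product on $\mathbb{R}^n$; $x$ is the point and $y$ the tangent vector. A Finsler metric $F$ on an open set $U\subseteq\mathbb{R}^n$ is called dually flat if $[F^2]_{x^ky^l}y^k-2[F^2]_{x^l}=0$ on $U$. *)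

theory Defs
  imports "HOL-Analysis.Analysis"
begin

definition pdx :: "(real^'n \<Rightarrow> real^'n \<Rightarrow> real) \<Rightarrow> 'n \<Rightarrow> real^'n \<Rightarrow> real^'n \<Rightarrow> real" where
  "pdx G k x y = deriv (\<lambda>t. G (x + t *\<^sub>R axis k 1) y) 0"

definition pdxy :: "(real^'n \<Rightarrow> real^'n \<Rightarrow> real) \<Rightarrow> 'n \<Rightarrow> 'n \<Rightarrow> real^'n \<Rightarrow> real^'n \<Rightarrow> real" where
  "pdxy G k l x y = deriv (\<lambda>s. pdx G k x (y + s *\<^sub>R axis l 1)) 0"

definition dually_flat :: "(real^'n) set \<Rightarrow> (real^'n \<Rightarrow> real^'n \<Rightarrow> real) \<Rightarrow> bool" where
  "dually_flat U F \<longleftrightarrow>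
     (\<forall>x\<in>U. \<forall>y. y \<noteq> 0 \<longrightarrow>
        (\<forall>k. (\<lambda>t. (F (x + t *\<^sub>R axis k 1) y)\<^sup>2) differentiable (at 0)) \<and>
        (\<forall>k l. (\<lambda>s. pdx (\<lambda>x y. (F x y)\<^sup>2) k x (y + s *\<^sub>R axis l 1)) differentiable (at 0)) \<and>
        (\<forall>l. (\<Sum>k\<in>UNIV. pdxy (\<lambda>x y. (F x y)\<^sup>2) k l x y * y $ k)
               - 2 * pdx (\<lambda>x y. (F x y)\<^sup>2) l x y = 0))"

definition ball_mu :: "real \<Rightarrow> (real^'n) set" where
  "ball_mu \<mu> = (if \<mu> < 0 then ball 0 (1 / sqrt (- \<mu>)) else UNIV)"

definition randers_F :: "real \<Rightarrow> real \<Rightarrow> real^'n \<Rightarrow> real^'n \<Rightarrow> real" where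
  "randers_F \<mu> lam x y =
     root 4 (1 + (\<mu> + lam\<^sup>2) * (norm x)\<^sup>2)
       * sqrt ((1 + \<mu> * (norm x)\<^sup>2) * (norm y)\<^sup>2 - \<mu> * (x \<bullet> y)\<^sup>2)
       / (1 + \<mu> * (norm x)\<^sup>2)
     + lam * (x \<bullet> y) / ((1 + \<mu> * (norm x)\<^sup>2) * root 4 (1 + (\<mu> + lam\<^sup>2) * (norm x)\<^sup>2))"

end

theory Submission
  imports Defs
begin

text \<open>
  The square of F depends on (x, y) only through a = |x|^2, b = <x,y> and c = |y|^2, say
  F^2 = \<Phi>(a, b, c). The chain rule turns [F^2]_{x^k y^l} y^k - 2 [F^2]_{x^l} into
  x_l (2 b \<Phi>_ab + c \<Phi>_bb - 4 \<Phi>_a) + y_l (4 b \<Phi>_ac + 2 c \<Phi>_bc - \<Phi>_b),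
  so F is dually flat as soon as \<Phi> solves these two linear PDEs. For the Randers metric,
  \<Phi> = (sqrt B sqrt A + \<lambda> b)^2 / (C^2 sqrt B) with C = 1 + \<mu> a, B = 1 + (\<mu> + \<lambda>^2) a and
  A = C c - \<mu> b^2, all positive on the ball when y \<noteq> 0, and both PDEs become rational
  identities in sqrt A and sqrt B that hold modulo (sqrt A)^2 = A and (sqrt B)^2 = B.
\<close>

lemma DERIV_compose_pair:
  fixes g :: "real \<Rightarrow> real \<Rightarrow> real" and u v :: "real \<Rightarrow> real"
  assumes "((\<lambda>(p, q). g p q) has_derivative (\<lambda>(dp, dq). gp * dp + gq * dq)) (at (u t, v t))"
    and "(u has_real_derivative u') (at t)" and "(v has_real_derivative v') (at t)"
  shows "((\<lambda>t. g (u t) (v t)) has_real_derivative gp * u' + gq * v') (at t)"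
proof -
  have "((\<lambda>t. (u t, v t)) has_derivative (\<lambda>h. (u' * h, v' * h))) (at t)"
    using has_derivative_Pair assms(2,3) unfolding has_field_derivative_def by blast
  from has_derivative_compose[OF this assms(1)] show ?thesis
    unfolding has_field_derivative_def
    by (simp add: o_def) (erule has_derivative_eq_rhs; simp add: fun_eq_iff algebra_simps)
qed

lemma eventually_add_axis_in_open:
  fixes x :: "real^'n"
  assumes "open U" "x \<in> U"
  shows "\<forall>\<^sub>F t in nhds 0. x + t *\<^sub>R axis k 1 \<in> U"
proof -
  have "((\<lambda>t. x + t *\<^sub>R axis k 1) \<longlongrightarrow> x) (nhds 0)"
    by (auto intro!: tendsto_eq_intros filterlim_ident)
  then show ?thesis using assms topological_tendstoD by blast
qed

lemma inner_add_axis_left: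
  fixes x y :: "real^'n"
  shows "(x + t *\<^sub>R axis k 1) \<bullet> y = x \<bullet> y + t * y $ k"
  by (simp add: inner_add_left inner_axis')

lemma inner_add_axis_self:
  fixes x :: "real^'n"
  shows "(x + t *\<^sub>R axis k 1) \<bullet> (x + t *\<^sub>R axis k 1) = x \<bullet> x + 2 * t * x $ k + t\<^sup>2"
  by (simp add: inner_add_left inner_add_right inner_axis inner_axis' algebra_simps power2_eq_square)

text \<open>
  Only the partial derivatives that occur are assumed: c = |y|^2 does not move with x, and
  a = |x|^2 does not move with y.
\<close>

locale square_of_invariants =
  fixes F :: "real^'n \<Rightarrow> real^'n \<Rightarrow> real" and U :: "(real^'n) set"
    and S :: "(real \<times> real \<times> real) set"
    and \<Phi> \<Phi>\<^sub>a \<Phi>\<^sub>b \<Phi>\<^sub>a\<^sub>b \<Phi>\<^sub>a\<^sub>c \<Phi>\<^sub>b\<^sub>b \<Phi>\<^sub>b\<^sub>c :: "real \<Rightarrow> real \<Rightarrow> real \<Rightarrow> real"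
  assumes open_U: "open U"
    and square_eq: "x \<in> U \<Longrightarrow> y \<noteq> 0 \<Longrightarrow> (F x y)\<^sup>2 = \<Phi> (x \<bullet> x) (x \<bullet> y) (y \<bullet> y)"
    and invariants_in_S: "x \<in> U \<Longrightarrow> y \<noteq> 0 \<Longrightarrow> (x \<bullet> x, x \<bullet> y, y \<bullet> y) \<in> S"
    and has_derivative_\<Phi>: "(a, b, c) \<in> S \<Longrightarrow>
      ((\<lambda>(u, v). \<Phi> u v c) has_derivative (\<lambda>(du, dv). \<Phi>\<^sub>a a b c * du + \<Phi>\<^sub>b a b c * dv)) (at (a, b))"
    and has_derivative_\<Phi>\<^sub>a: "(a, b, c) \<in> S \<Longrightarrow>
      ((\<lambda>(v, w). \<Phi>\<^sub>a a v w) has_derivative (\<lambda>(dv, dw). \<Phi>\<^sub>a\<^sub>b a b c * dv + \<Phi>\<^sub>a\<^sub>c a b c * dw)) (at (b, c))"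
    and has_derivative_\<Phi>\<^sub>b: "(a, b, c) \<in> S \<Longrightarrow>
      ((\<lambda>(v, w). \<Phi>\<^sub>b a v w) has_derivative (\<lambda>(dv, dw). \<Phi>\<^sub>b\<^sub>b a b c * dv + \<Phi>\<^sub>b\<^sub>c a b c * dw)) (at (b, c))"
begin

lemma DERIV_square_along_x:
  assumes x: "x \<in> U" and y: "y \<noteq> 0"
  shows "((\<lambda>t. (F (x + t *\<^sub>R axis k 1) y)\<^sup>2) has_real_derivative
    2 * x $ k * \<Phi>\<^sub>a (x \<bullet> x) (x \<bullet> y) (y \<bullet> y) + y $ k * \<Phi>\<^sub>b (x \<bullet> x) (x \<bullet> y) (y \<bullet> y)) (at 0)"
proof -
  define u where "u t = x \<bullet> x + 2 * t * x $ k + t\<^sup>2" for t :: real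
  define v where "v t = x \<bullet> y + t * y $ k" for t :: real
  have "\<forall>\<^sub>F t in nhds 0. (F (x + t *\<^sub>R axis k 1) y)\<^sup>2 = \<Phi> (u t) (v t) (y \<bullet> y)"
    using eventually_add_axis_in_open[OF open_U x, of k]
    by eventually_elim (simp add: square_eq y u_def v_def inner_add_axis_self, simp add: inner_add_axis_left)
  moreover have "((\<lambda>t. \<Phi> (u t) (v t) (y \<bullet> y)) has_real_derivative
      \<Phi>\<^sub>a (x \<bullet> x) (x \<bullet> y) (y \<bullet> y) * (2 * x $ k) + \<Phi>\<^sub>b (x \<bullet> x) (x \<bullet> y) (y \<bullet> y) * y $ k) (at 0)"
  proof (rule DERIV_compose_pair[where g = "\<lambda>p q. \<Phi> p q (y \<bullet> y)"])
    show "((\<lambda>(p, q). \<Phi> p q (y \<bullet> y)) has_derivative (\<lambda>(dp, dq).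
        \<Phi>\<^sub>a (x \<bullet> x) (x \<bullet> y) (y \<bullet> y) * dp + \<Phi>\<^sub>b (x \<bullet> x) (x \<bullet> y) (y \<bullet> y) * dq)) (at (u 0, v 0))"
      using has_derivative_\<Phi>[OF invariants_in_S[OF x y]] by (simp add: u_def v_def)
    show "(u has_real_derivative 2 * x $ k) (at 0)"
      unfolding u_def by (rule derivative_eq_intros refl | simp)+
    show "(v has_real_derivative y $ k) (at 0)"
      unfolding v_def by (rule derivative_eq_intros refl | simp)+
  qed
  ultimately show ?thesis
    by (subst DERIV_cong_ev[OF refl _ refl]) (simp_all add: mult.commute)
qed

lemma pdx_square:
  assumes "x \<in> U" "y \<noteq> 0"
  shows "pdx (\<lambda>x y. (F x y)\<^sup>2) k x y =
    2 * x $ k * \<Phi>\<^sub>a (x \<bullet> x) (x \<bullet> y) (y \<bullet> y) + y $ k * \<Phi>\<^sub>b (x \<bullet> x) (x \<bullet> y) (y \<bullet> y)"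
  unfolding pdx_def by (rule DERIV_imp_deriv[OF DERIV_square_along_x[OF assms]])

lemma eventually_pdx_square_along_y:
  assumes x: "x \<in> U" and y: "y \<noteq> 0"
  shows "\<forall>\<^sub>F s in nhds 0. pdx (\<lambda>x y. (F x y)\<^sup>2) k x (y + s *\<^sub>R axis l 1) =
    2 * x $ k * \<Phi>\<^sub>a (x \<bullet> x) (x \<bullet> y + s * x $ l) (y \<bullet> y + 2 * s * y $ l + s\<^sup>2)
    + (y $ k + s * axis l 1 $ k) * \<Phi>\<^sub>b (x \<bullet> x) (x \<bullet> y + s * x $ l) (y \<bullet> y + 2 * s * y $ l + s\<^sup>2)"
proof -
  have "((\<lambda>s. y + s *\<^sub>R axis l 1) \<longlongrightarrow> y) (nhds 0)"
    by (auto intro!: tendsto_eq_intros filterlim_ident)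
  then have "\<forall>\<^sub>F s in nhds 0. y + s *\<^sub>R axis l 1 \<noteq> 0"
    using y tendsto_imp_eventually_ne by blast
  then show ?thesis
  proof eventually_elim
    case (elim s)
    have "x \<bullet> (y + s *\<^sub>R axis l 1) = x \<bullet> y + s * x $ l"
      by (simp add: inner_add_right inner_axis)
    then show ?case
      by (simp add: pdx_square[OF x elim] inner_add_axis_self)
  qed
qed

lemma DERIV_pdx_square_along_y:
  assumes x: "x \<in> U" and y: "y \<noteq> 0"
  defines "a \<equiv> x \<bullet> x" and "b \<equiv> x \<bullet> y" and "c \<equiv> y \<bullet> y"
  shows "((\<lambda>s. pdx (\<lambda>x y. (F x y)\<^sup>2) k x (y + s *\<^sub>R axis l 1)) has_real_derivative
    2 * x $ k * (\<Phi>\<^sub>a\<^sub>b a b c * x $ l + \<Phi>\<^sub>a\<^sub>c a b c * (2 * y $ l))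
    + y $ k * (\<Phi>\<^sub>b\<^sub>b a b c * x $ l + \<Phi>\<^sub>b\<^sub>c a b c * (2 * y $ l))
    + axis l 1 $ k * \<Phi>\<^sub>b a b c) (at 0)"
proof -
  define v where "v s = b + s * x $ l" for s :: real
  define w where "w s = c + 2 * s * y $ l + s\<^sup>2" for s :: real
  have S: "(a, b, c) \<in> S"
    unfolding a_def b_def c_def using x y by (rule invariants_in_S)
  have v: "(v has_real_derivative x $ l) (at 0)" and w: "(w has_real_derivative 2 * y $ l) (at 0)"
    unfolding v_def w_def by (rule derivative_eq_intros refl | simp)+
  have vw0: "(v 0, w 0) = (b, c)" by (simp add: v_def w_def)
  have d\<^sub>a: "((\<lambda>s. \<Phi>\<^sub>a a (v s) (w s)) has_real_derivative
      \<Phi>\<^sub>a\<^sub>b a b c * x $ l + \<Phi>\<^sub>a\<^sub>c a b c * (2 * y $ l)) (at 0)"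
    by (rule DERIV_compose_pair[where g = "\<Phi>\<^sub>a a", OF _ v w])
      (simp add: vw0 has_derivative_\<Phi>\<^sub>a[OF S])
  have d\<^sub>b: "((\<lambda>s. \<Phi>\<^sub>b a (v s) (w s)) has_real_derivative
      \<Phi>\<^sub>b\<^sub>b a b c * x $ l + \<Phi>\<^sub>b\<^sub>c a b c * (2 * y $ l)) (at 0)"
    by (rule DERIV_compose_pair[where g = "\<Phi>\<^sub>b a", OF _ v w])
      (simp add: vw0 has_derivative_\<Phi>\<^sub>b[OF S])
  have "((\<lambda>s. 2 * x $ k * \<Phi>\<^sub>a a (v s) (w s) + (y $ k + s * axis l 1 $ k) * \<Phi>\<^sub>b a (v s) (w s))
      has_real_derivative
      2 * x $ k * (\<Phi>\<^sub>a\<^sub>b a b c * x $ l + \<Phi>\<^sub>a\<^sub>c a b c * (2 * y $ l))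
      + y $ k * (\<Phi>\<^sub>b\<^sub>b a b c * x $ l + \<Phi>\<^sub>b\<^sub>c a b c * (2 * y $ l))
      + axis l 1 $ k * \<Phi>\<^sub>b a b c) (at 0)"
    by (rule derivative_eq_intros d\<^sub>a d\<^sub>b refl)+ (simp add: v_def w_def algebra_simps)
  moreover note eventually_pdx_square_along_y[OF x y, of k l]
  ultimately show ?thesis
    by (subst DERIV_cong_ev[OF refl _ refl]) (simp_all add: a_def b_def c_def v_def w_def)
qed

lemma dually_flat_defect:
  assumes x: "x \<in> U" and y: "y \<noteq> 0"
  defines "a \<equiv> x \<bullet> x" and "b \<equiv> x \<bullet> y" and "c \<equiv> y \<bullet> y"
  shows "(\<Sum>k\<in>UNIV. pdxy (\<lambda>x y. (F x y)\<^sup>2) k l x y * y $ k) - 2 * pdx (\<lambda>x y. (F x y)\<^sup>2) l x y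
    = x $ l * (2 * b * \<Phi>\<^sub>a\<^sub>b a b c + c * \<Phi>\<^sub>b\<^sub>b a b c - 4 * \<Phi>\<^sub>a a b c)
      + y $ l * (4 * b * \<Phi>\<^sub>a\<^sub>c a b c + 2 * c * \<Phi>\<^sub>b\<^sub>c a b c - \<Phi>\<^sub>b a b c)"
proof -
  define D\<^sub>a where "D\<^sub>a = \<Phi>\<^sub>a\<^sub>b a b c * x $ l + \<Phi>\<^sub>a\<^sub>c a b c * (2 * y $ l)"
  define D\<^sub>b where "D\<^sub>b = \<Phi>\<^sub>b\<^sub>b a b c * x $ l + \<Phi>\<^sub>b\<^sub>c a b c * (2 * y $ l)"
  have "pdxy (\<lambda>x y. (F x y)\<^sup>2) k l x y = 2 * D\<^sub>a * x $ k + D\<^sub>b * y $ k + \<Phi>\<^sub>b a b c * axis l 1 $ k" for k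
    unfolding pdxy_def using DERIV_imp_deriv[OF DERIV_pdx_square_along_y[OF x y, of k l]]
    by (simp add: D\<^sub>a_def D\<^sub>b_def a_def b_def c_def algebra_simps)
  then have "(\<Sum>k\<in>UNIV. pdxy (\<lambda>x y. (F x y)\<^sup>2) k l x y * y $ k)
      = 2 * D\<^sub>a * (\<Sum>k\<in>UNIV. x $ k * y $ k) + D\<^sub>b * (\<Sum>k\<in>UNIV. y $ k * y $ k)
        + \<Phi>\<^sub>b a b c * (\<Sum>k\<in>UNIV. axis l 1 $ k * y $ k)"
    by (simp add: algebra_simps sum.distrib sum_distrib_left)
  also have "\<dots> = 2 * D\<^sub>a * b + D\<^sub>b * c + \<Phi>\<^sub>b a b c * y $ l"
    by (simp add: b_def c_def inner_vec_def axis_def if_distrib[of "\<lambda>z. z * _"] cong: if_cong)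
  finally show ?thesis
    by (simp add: pdx_square[OF x y] D\<^sub>a_def D\<^sub>b_def a_def b_def c_def algebra_simps)
qed

theorem dually_flatI:
  assumes pde_a: "\<And>a b c. (a, b, c) \<in> S \<Longrightarrow> 2 * b * \<Phi>\<^sub>a\<^sub>b a b c + c * \<Phi>\<^sub>b\<^sub>b a b c = 4 * \<Phi>\<^sub>a a b c"
    and pde_b: "\<And>a b c. (a, b, c) \<in> S \<Longrightarrow> 4 * b * \<Phi>\<^sub>a\<^sub>c a b c + 2 * c * \<Phi>\<^sub>b\<^sub>c a b c = \<Phi>\<^sub>b a b c"
  shows "dually_flat U F"
  unfolding dually_flat_def
proof (intro ballI allI impI conjI)
  fix x y :: "real^'n" and k l
  assume x: "x \<in> U" and y: "y \<noteq> 0"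
  show "(\<lambda>t. (F (x + t *\<^sub>R axis k 1) y)\<^sup>2) differentiable (at 0)"
    using DERIV_square_along_x[OF x y] real_differentiable_def by blast
  show "(\<lambda>s. pdx (\<lambda>x y. (F x y)\<^sup>2) k x (y + s *\<^sub>R axis l 1)) differentiable (at 0)"
    using DERIV_pdx_square_along_y[OF x y] real_differentiable_def by blast
  have S: "(x \<bullet> x, x \<bullet> y, y \<bullet> y) \<in> S" using x y by (rule invariants_in_S)
  show "(\<Sum>k\<in>UNIV. pdxy (\<lambda>x y. (F x y)\<^sup>2) k l x y * y $ k) - 2 * pdx (\<lambda>x y. (F x y)\<^sup>2) l x y = 0"
    by (simp add: dually_flat_defect[OF x y] pde_a[OF S] pde_b[OF S])
qed

end

context
  fixes \<mu> lam :: real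
begin

definition "randers_domain =
  {(a, b, c). 0 < 1 + \<mu> * a \<and> 0 < 1 + (\<mu> + lam\<^sup>2) * a \<and> 0 < (1 + \<mu> * a) * c - \<mu> * b\<^sup>2}"

definition "randers_s a = sqrt (1 + (\<mu> + lam\<^sup>2) * a)"
definition "randers_q a b c = sqrt ((1 + \<mu> * a) * c - \<mu> * b\<^sup>2)"

lemma randers_domain_sqrt:
  assumes "(a, b, c) \<in> randers_domain"
  shows "0 < 1 + \<mu> * a" "0 < randers_s a" "(randers_s a)\<^sup>2 = 1 + (\<mu> + lam\<^sup>2) * a"
    "0 < randers_q a b c" "(randers_q a b c)\<^sup>2 = (1 + \<mu> * a) * c - \<mu> * b\<^sup>2"
  using assms by (simp_all add: randers_domain_def randers_s_def randers_q_def)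

lemma DERIV_randers_s:
  "0 < 1 + (\<mu> + lam\<^sup>2) * a \<Longrightarrow>
    (randers_s has_real_derivative (\<mu> + lam\<^sup>2) / (2 * randers_s a)) (at a)"
  unfolding randers_s_def
  by (rule derivative_eq_intros refl | simp)+ (simp add: field_simps)

text \<open>
  In these coordinates randers_F is randers_P / ((1 + \<mu> a) root 4 B) with B = 1 + (\<mu> + \<lambda>^2) a,
  which makes randers_Phi below its square.
\<close>

definition "randers_P a b c = randers_s a * randers_q a b c + lam * b"

definition "randers_P_a a b c =
  (\<mu> + lam\<^sup>2) * randers_q a b c / (2 * randers_s a) + \<mu> * c * randers_s a / (2 * randers_q a b c)"
definition "randers_P_b a b c = lam - \<mu> * b * randers_s a / randers_q a b c"
definition "randers_P_c a b c = (1 + \<mu> * a) * randers_s a / (2 * randers_q a b c)"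

definition "randers_P_ab a b c =
  - (\<mu> + lam\<^sup>2) * \<mu> * b / (2 * randers_s a * randers_q a b c)
  + \<mu>\<^sup>2 * b * c * randers_s a / (2 * randers_q a b c ^ 3)"
definition "randers_P_ac a b c =
  (\<mu> + lam\<^sup>2) * (1 + \<mu> * a) / (4 * randers_s a * randers_q a b c)
  + \<mu> * randers_s a / (2 * randers_q a b c)
  - \<mu> * c * (1 + \<mu> * a) * randers_s a / (4 * randers_q a b c ^ 3)"
definition "randers_P_bb a b c =
  - \<mu> * randers_s a / randers_q a b c - \<mu>\<^sup>2 * b\<^sup>2 * randers_s a / randers_q a b c ^ 3"
definition "randers_P_bc a b c = \<mu> * b * (1 + \<mu> * a) * randers_s a / (2 * randers_q a b c ^ 3)"

lemma has_derivative_randers_P_ab: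
  assumes D: "(a, b, c) \<in> randers_domain"
  shows "((\<lambda>(u, v). randers_P u v c) has_derivative
    (\<lambda>(du, dv). randers_P_a a b c * du + randers_P_b a b c * dv)) (at (a, b))"
  unfolding randers_P_def randers_s_def randers_q_def case_prod_beta'
  apply (rule derivative_eq_intros refl | (use D in \<open>simp add: randers_domain_def\<close>; fail))+
  apply (simp only: fst_conv snd_conv flip: randers_s_def randers_q_def)
  using randers_domain_sqrt(1,2,4)[OF D]
  apply (simp add: fun_eq_iff randers_P_a_def randers_P_b_def field_simps)
  done

lemma has_derivative_randers_P_bc:
  assumes D: "(a, b, c) \<in> randers_domain"
  shows "((\<lambda>(v, w). randers_P a v w) has_derivative
    (\<lambda>(dv, dw). randers_P_b a b c * dv + randers_P_c a b c * dw)) (at (b, c))"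
  unfolding randers_P_def randers_q_def case_prod_beta'
  apply (rule derivative_eq_intros refl | (use D in \<open>simp add: randers_domain_def\<close>; fail))+
  apply (simp only: fst_conv snd_conv flip: randers_q_def)
  using randers_domain_sqrt(1,2,4)[OF D]
  apply (simp add: fun_eq_iff randers_P_b_def randers_P_c_def field_simps)
  done

lemma has_derivative_randers_P_a_bc:
  assumes D: "(a, b, c) \<in> randers_domain"
  shows "((\<lambda>(v, w). randers_P_a a v w) has_derivative
    (\<lambda>(dv, dw). randers_P_ab a b c * dv + randers_P_ac a b c * dw)) (at (b, c))"
  unfolding randers_P_a_def randers_q_def case_prod_beta'
  apply (rule derivative_eq_intros refl
    | (use D randers_domain_sqrt[OF D] in \<open>simp add: randers_domain_def\<close>; fail))+
  apply (simp only: fst_conv snd_conv flip: randers_q_def)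
  using randers_domain_sqrt(1,2,4)[OF D]
  apply (simp add: fun_eq_iff randers_P_ab_def randers_P_ac_def field_simps)
  apply algebra
  done

lemma has_derivative_randers_P_b_bc:
  assumes D: "(a, b, c) \<in> randers_domain"
  shows "((\<lambda>(v, w). randers_P_b a v w) has_derivative
    (\<lambda>(dv, dw). randers_P_bb a b c * dv + randers_P_bc a b c * dw)) (at (b, c))"
  unfolding randers_P_b_def randers_q_def case_prod_beta'
  apply (rule derivative_eq_intros refl
    | (use D randers_domain_sqrt[OF D] in \<open>simp add: randers_domain_def\<close>; fail))+
  apply (simp only: fst_conv snd_conv flip: randers_q_def)
  using randers_domain_sqrt(1,2,4)[OF D]
  apply (simp add: fun_eq_iff randers_P_bb_def randers_P_bc_def field_simps)
  apply algebra
  done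

definition "randers_Phi a b c = (randers_P a b c)\<^sup>2 / ((1 + \<mu> * a)\<^sup>2 * randers_s a)"

definition "randers_Phi_a a b c =
  2 * randers_P a b c * randers_P_a a b c / ((1 + \<mu> * a)\<^sup>2 * randers_s a)
  - 2 * \<mu> * (randers_P a b c)\<^sup>2 / ((1 + \<mu> * a) ^ 3 * randers_s a)
  - (\<mu> + lam\<^sup>2) * (randers_P a b c)\<^sup>2 / (2 * (1 + \<mu> * a)\<^sup>2 * randers_s a ^ 3)"
definition "randers_Phi_b a b c =
  2 * randers_P a b c * randers_P_b a b c / ((1 + \<mu> * a)\<^sup>2 * randers_s a)"

definition "randers_Phi_ab a b c =
  2 * (randers_P_b a b c * randers_P_a a b c + randers_P a b c * randers_P_ab a b c)
    / ((1 + \<mu> * a)\<^sup>2 * randers_s a)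
  - 4 * \<mu> * randers_P a b c * randers_P_b a b c / ((1 + \<mu> * a) ^ 3 * randers_s a)
  - (\<mu> + lam\<^sup>2) * randers_P a b c * randers_P_b a b c / ((1 + \<mu> * a)\<^sup>2 * randers_s a ^ 3)"
definition "randers_Phi_ac a b c =
  2 * (randers_P_c a b c * randers_P_a a b c + randers_P a b c * randers_P_ac a b c)
    / ((1 + \<mu> * a)\<^sup>2 * randers_s a)
  - 4 * \<mu> * randers_P a b c * randers_P_c a b c / ((1 + \<mu> * a) ^ 3 * randers_s a)
  - (\<mu> + lam\<^sup>2) * randers_P a b c * randers_P_c a b c / ((1 + \<mu> * a)\<^sup>2 * randers_s a ^ 3)"
definition "randers_Phi_bb a b c =
  2 * ((randers_P_b a b c)\<^sup>2 + randers_P a b c * randers_P_bb a b c)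
    / ((1 + \<mu> * a)\<^sup>2 * randers_s a)"
definition "randers_Phi_bc a b c =
  2 * (randers_P_c a b c * randers_P_b a b c + randers_P a b c * randers_P_bc a b c)
    / ((1 + \<mu> * a)\<^sup>2 * randers_s a)"

lemma has_derivative_randers_Phi_ab:
  assumes D: "(a, b, c) \<in> randers_domain"
  shows "((\<lambda>(u, v). randers_Phi u v c) has_derivative
    (\<lambda>(du, dv). randers_Phi_a a b c * du + randers_Phi_b a b c * dv)) (at (a, b))"
  unfolding randers_Phi_def case_prod_beta'
  apply (rule derivative_eq_intros has_derivative_randers_P_ab[OF D, unfolded case_prod_beta']
      DERIV_randers_s[THEN DERIV_compose_FDERIV] refl
    | (use D randers_domain_sqrt[OF D] in \<open>simp add: randers_domain_def\<close>; fail))+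
  using randers_domain_sqrt(1,2,4)[OF D]
  apply (simp add: fun_eq_iff randers_Phi_a_def randers_Phi_b_def field_simps)
  apply algebra
  done

lemma has_derivative_randers_Phi_a_bc:
  assumes D: "(a, b, c) \<in> randers_domain"
  shows "((\<lambda>(v, w). randers_Phi_a a v w) has_derivative
    (\<lambda>(dv, dw). randers_Phi_ab a b c * dv + randers_Phi_ac a b c * dw)) (at (b, c))"
  unfolding randers_Phi_a_def case_prod_beta'
  apply (rule derivative_eq_intros has_derivative_randers_P_bc[OF D, unfolded case_prod_beta']
      has_derivative_randers_P_a_bc[OF D, unfolded case_prod_beta'] refl
    | (use D randers_domain_sqrt[OF D] in \<open>simp add: randers_domain_def\<close>; fail))+
  using randers_domain_sqrt(1,2,4)[OF D]
  by (simp add: fun_eq_iff randers_Phi_ab_def randers_Phi_ac_def field_simps)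

lemma has_derivative_randers_Phi_b_bc:
  assumes D: "(a, b, c) \<in> randers_domain"
  shows "((\<lambda>(v, w). randers_Phi_b a v w) has_derivative
    (\<lambda>(dv, dw). randers_Phi_bb a b c * dv + randers_Phi_bc a b c * dw)) (at (b, c))"
  unfolding randers_Phi_b_def case_prod_beta'
  apply (rule derivative_eq_intros has_derivative_randers_P_bc[OF D, unfolded case_prod_beta']
      has_derivative_randers_P_b_bc[OF D, unfolded case_prod_beta'] refl
    | (use D randers_domain_sqrt[OF D] in \<open>simp add: randers_domain_def\<close>; fail))+
  using randers_domain_sqrt(1,2,4)[OF D]
  by (simp add: fun_eq_iff randers_Phi_bb_def randers_Phi_bc_def field_simps)
    (simp add: power2_eq_square)

lemma randers_Phi_pde_a:
  assumes "(a, b, c) \<in> randers_domain"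
  shows "2 * b * randers_Phi_ab a b c + c * randers_Phi_bb a b c = 4 * randers_Phi_a a b c"
  using randers_domain_sqrt[OF assms]
  unfolding randers_Phi_ab_def randers_Phi_bb_def randers_Phi_a_def randers_P_def
    randers_P_a_def randers_P_b_def randers_P_ab_def randers_P_bb_def
  by (simp add: field_simps) algebra

lemma randers_Phi_pde_b:
  assumes "(a, b, c) \<in> randers_domain"
  shows "4 * b * randers_Phi_ac a b c + 2 * c * randers_Phi_bc a b c = randers_Phi_b a b c"
  using randers_domain_sqrt[OF assms]
  unfolding randers_Phi_ac_def randers_Phi_bc_def randers_Phi_b_def randers_P_def
    randers_P_a_def randers_P_b_def randers_P_c_def randers_P_ac_def randers_P_bc_def
  by (simp add: field_simps) algebra

end

lemma inner_quadratic_pos: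
  fixes x y :: "'a::real_inner"
  assumes C: "0 < 1 + \<mu> * (x \<bullet> x)" and y: "y \<noteq> 0"
  shows "0 < (1 + \<mu> * (x \<bullet> x)) * (y \<bullet> y) - \<mu> * (x \<bullet> y)\<^sup>2"
proof (cases "\<mu> < 0")
  case True
  have "0 < (1 + \<mu> * (x \<bullet> x)) * (y \<bullet> y)" using C y by simp
  moreover have "\<mu> * (x \<bullet> y)\<^sup>2 \<le> 0" using True by (simp add: mult_nonpos_nonneg)
  ultimately show ?thesis by linarith
next
  case False
  have "0 \<le> \<mu> * ((x \<bullet> x) * (y \<bullet> y) - (x \<bullet> y)\<^sup>2)"
    using False Cauchy_Schwarz_ineq[of x y] by simp
  moreover have "0 < y \<bullet> y" using y by simp
  moreover have "(1 + \<mu> * (x \<bullet> x)) * (y \<bullet> y) - \<mu> * (x \<bullet> y)\<^sup>2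
      = y \<bullet> y + \<mu> * ((x \<bullet> x) * (y \<bullet> y) - (x \<bullet> y)\<^sup>2)"
    by (simp add: algebra_simps)
  ultimately show ?thesis by linarith
qed

lemma ball_mu_inner_pos:
  fixes x :: "real^'n"
  assumes "x \<in> ball_mu \<mu>"
  shows "0 < 1 + \<mu> * (x \<bullet> x)"
proof (cases "\<mu> < 0")
  case True
  then have "norm x * sqrt (- \<mu>) < 1"
    using assms by (simp add: ball_mu_def field_simps)
  then have "(norm x * sqrt (- \<mu>))\<^sup>2 < 1\<^sup>2"
    using True by (intro power_strict_mono) auto
  then have "(x \<bullet> x) * (- \<mu>) < 1"
    using True by (simp add: power_mult_distrib power2_norm_eq_inner)
  then show ?thesis by (simp add: algebra_simps)
next
  case False
  then show ?thesis by (simp add: add_pos_nonneg)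
qed

lemma one_plus_mult_add_square_pos:
  fixes t :: real
  assumes "0 < 1 + \<mu> * t" "0 \<le> t"
  shows "0 < 1 + (\<mu> + lam\<^sup>2) * t"
proof -
  have "0 \<le> lam\<^sup>2 * t" using assms(2) by simp
  then show ?thesis using assms(1) by (simp add: distrib_right)
qed

lemma randers_invariants_in_domain:
  fixes x y :: "real^'n"
  assumes "x \<in> ball_mu \<mu>" "y \<noteq> 0"
  shows "(x \<bullet> x, x \<bullet> y, y \<bullet> y) \<in> randers_domain \<mu> lam"
  using ball_mu_inner_pos[OF assms(1)] inner_quadratic_pos[OF ball_mu_inner_pos[OF assms(1)] assms(2)]
  by (simp add: randers_domain_def one_plus_mult_add_square_pos)

lemma randers_F_square:
  fixes x y :: "real^'n"
  assumes "x \<in> ball_mu \<mu>"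
  shows "(randers_F \<mu> lam x y)\<^sup>2 = randers_Phi \<mu> lam (x \<bullet> x) (x \<bullet> y) (y \<bullet> y)"
proof -
  define C where "C = 1 + \<mu> * (x \<bullet> x)"
  define r where "r = root 4 (1 + (\<mu> + lam\<^sup>2) * (x \<bullet> x))"
  define q where "q = randers_q \<mu> (x \<bullet> x) (x \<bullet> y) (y \<bullet> y)"
  have "0 < C" using ball_mu_inner_pos[OF assms] by (simp add: C_def)
  then have B: "0 < 1 + (\<mu> + lam\<^sup>2) * (x \<bullet> x)"
    by (simp add: C_def one_plus_mult_add_square_pos)
  then have "0 < r" by (simp add: r_def)
  have "(r\<^sup>2)\<^sup>2 = 1 + (\<mu> + lam\<^sup>2) * (x \<bullet> x)"
    using B by (simp add: r_def flip: power_mult)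
  then have r2: "r\<^sup>2 = randers_s \<mu> lam (x \<bullet> x)"
    unfolding randers_s_def by (intro real_sqrt_unique[symmetric]) simp_all
  have "randers_F \<mu> lam x y = r * q / C + lam * (x \<bullet> y) / (C * r)"
    by (simp add: randers_F_def power2_norm_eq_inner C_def r_def q_def randers_q_def)
  also have "\<dots> = (r\<^sup>2 * q + lam * (x \<bullet> y)) / (C * r)"
    using \<open>0 < C\<close> \<open>0 < r\<close> by (simp add: field_simps power2_eq_square)
  finally show ?thesis
    using \<open>0 < C\<close> \<open>0 < r\<close>
    by (simp add: randers_Phi_def randers_P_def C_def q_def power_divide power_mult_distrib flip: r2)
qed

lemma open_ball_mu: "open (ball_mu \<mu>)"
  by (simp add: ball_mu_def)

theorem theorem1p3:
  fixes \<mu> lam :: real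
  shows "dually_flat (ball_mu \<mu> :: (real^'n) set) (randers_F \<mu> lam)"
proof -
  interpret square_of_invariants "randers_F \<mu> lam :: real^'n \<Rightarrow> _" "ball_mu \<mu>" "randers_domain \<mu> lam"
    "randers_Phi \<mu> lam" "randers_Phi_a \<mu> lam" "randers_Phi_b \<mu> lam"
    "randers_Phi_ab \<mu> lam" "randers_Phi_ac \<mu> lam" "randers_Phi_bb \<mu> lam" "randers_Phi_bc \<mu> lam"
    by unfold_locales
      (simp_all add: open_ball_mu randers_F_square randers_invariants_in_domain
        has_derivative_randers_Phi_ab has_derivative_randers_Phi_a_bc has_derivative_randers_Phi_b_bc)
  show ?thesis
    by (rule dually_flatI) (simp_all add: randers_Phi_pde_a randers_Phi_pde_b)
qed

end
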